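(* Consider the following disjunctive hierarchical secret sharing scheme. Setting. Let $n,m$ be positive integers and let the participant set $\mathcal{P}=\{1,\dots,n\}$ be partitioned into $m$ disjoint nonempty blocks $\mathcal{P}_1,\dots,\mathcal{P}_m$ of consecutive indices: with $n_\ell=|\mathcal{P}_\ell|$, $N_0=0$, $N_\ell=\sum_{w=1}^{\ell}n_w$, we have $\mathcal{P}_\ell=\{N_{\ell-1}+1,\dots,N_\ell\}$, so that $\mathcal{P}_1\cup\dots\cup\mathcal{P}_\ell=[N_\ell]:=\{1,\dots,N_\ell\}$. Let $t_1,\dots,t_m$ be integers with $1\le t_1<t_2<\dots<t_m$ and $t_\ell\le N_\ell$ for all $\ell\in[m]$. Public parameters. A prime $m_0$ and integers $m_1,\dots,m_n$ such that $\gcd(m_i,m_j)=1$ for all $0\le i<j\le n$, $m_0<m_1<\dots<m_n$, and, for some real numbers $k\ge 1$ and $\theta\in(0,1)$, $km_0<m_i<km_0+m_0^{\theta}$ for all $i\in[n]$. Participant $i$ is assigned modulus $m_i$. Also $m$ publicly known distinct functions $h_1,\dots,h_m$, where for each $i\in[n]$ and $\ell\in[m]$, $h_\ell(x,\ell)\in\mathbb{Z}_{m_i}$ for $x\in\mathbb{Z}_{m_i}$. Share generation. For a secret $s\in\mathbb{Z}_{m_0}=\{0,\dots,m_0-1\}$, the dealer chooses integers $c_i\in\mathbb{Z}_{m_i}$ for $i\in[N_{m-1}]$ and integers $\alpha_\ell$ ($\ell\in[m]$) such that $0\le y_\ell:=s+\alpha_\ell m_0<\prod_{i=1}^{t_\ell}m_i$.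 Participant $i$ receives the share $s_i=c_i$ if $i\in[N_{m-1}]$ and $s_i=y_m \bmod m_i$ if $i\in\{N_{m-1}+1,\dots,N_m\}$. For every $i\in[N_{m-1}]$, letting $\ell_1$ be the index with $i\in\mathcal{P}_{\ell_1}$, the dealer publishes $w_i^{(\ell)}=(y_\ell-h_\ell(s_i,\ell))\bmod m_i$ for every $\ell\in\{\ell_1,\dots,m\}$. Reconstruction. Given $\mathcal{A}\subseteq\mathcal{P}$ and $\ell\in[m]$ with $\mathcal{A}^{(\ell)}:=\mathcal{A}\cap[N_\ell]$ satisfying $|\mathcal{A}^{(\ell)}|\ge t_\ell$, the participants compute, for $i\in\mathcal{A}^{(\ell)}$, $s_i^{(\ell)}=h_\ell(s_i,\ell)+w_i^{(\ell)}$ if $\ell\le m-1$, or if $\ell=m$ and $i\le N_{m-1}$; and $s_i^{(m)}=s_i$ if $\ell=m$ and $i\in\{N_{m-1}+1,\dots,N_m\}$. They then compute $Y=\left(\sum_{i\in\mathcal{A}^{(\ell)}}\lambda_{i}M_{i}s_i^{(\ell)}\right)\bmod M$, the least nonnegative residue, where $M=\prod_{i\in\mathcal{A}^{(\ell)}}m_i$, $M_i=M/m_i$, $\lambda_i\equiv M_i^{-1}\pmod{m_i}$, and output $Y\bmod m_0$. Claim. For every secret $s\in\mathbb{Z}_{m_0}$, every admissible choice of the $c_i$ and $\alpha_\ell$, and every subset $\mathcal{A}$ in the access structure $\Gamma=\{\mathcal{A}\subseteq\mathcal{P}:\exists\,\ell\in[m]\text{ with }|\mathcal{A}\cap(\bigcup_{w=1}^{\ell}\mathcal{P}_w)|\ge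 t_\ell\}$, taking any $\ell$ with $|\mathcal{A}\cap[N_\ell]|\ge t_\ell$, the reconstruction procedure yields $Y=y_\ell$ and outputs $Y\bmod m_0=s$.
   Context: $\mathbb{Z}_{q}$ denotes $\{0,1,\dots,q-1\}$ and $x\bmod q$ denotes the least nonnegative residue. $[n]=\{1,\dots,n\}$. The functions $h_\ell$ are intended to be one-way functions, but no property of them is needed beyond being fixed public maps. *)

theory Defs
  imports "HOL-Number_Theory.Number_Theory"
begin

definition Nsum :: "(nat \<Rightarrow> nat) \<Rightarrow> nat \<Rightarrow> nat" where
  "Nsum nb l = (\<Sum>w=1..l. nb w)"

definition block :: "(nat \<Rightarrow> nat) \<Rightarrow> nat \<Rightarrow> nat set" where
  "block nb l = {Nsum nb (l - 1) + 1 .. Nsum nb l}"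

definition access_structure ::
  "nat \<Rightarrow> nat \<Rightarrow> (nat \<Rightarrow> nat) \<Rightarrow> (nat \<Rightarrow> nat) \<Rightarrow> nat set set" where
  "access_structure n m nb t =
     {A. A \<subseteq> {1..n} \<and> (\<exists>l\<in>{1..m}. card (A \<inter> (\<Union>w\<in>{1..l}. block nb w)) \<ge> t l)}"

definition yval :: "int \<Rightarrow> (nat \<Rightarrow> int) \<Rightarrow> nat \<Rightarrow> nat \<Rightarrow> int" where
  "yval s alpha m0 l = s + alpha l * int m0"

definition recon_share ::
  "nat \<Rightarrow> (nat \<Rightarrow> nat) \<Rightarrow> (nat \<Rightarrow> int \<Rightarrow> nat \<Rightarrow> int) \<Rightarrow> (nat \<Rightarrow> int)
   \<Rightarrow> (nat \<Rightarrow> nat \<Rightarrow> int) \<Rightarrow> nat \<Rightarrow> nat \<Rightarrow> int" where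
  "recon_share m nb h sh w l i =
     (if l \<le> m - 1 \<or> i \<le> Nsum nb (m - 1) then h l (sh i) l + w i l else sh i)"

definition recon_Y ::
  "(nat \<Rightarrow> nat) \<Rightarrow> nat set \<Rightarrow> (nat \<Rightarrow> int) \<Rightarrow> (nat \<Rightarrow> int) \<Rightarrow> int" where
  "recon_Y mm Al lam sl =
     (let M = (\<Prod>i\<in>Al. int (mm i))
      in (\<Sum>i\<in>Al. lam i * (M div int (mm i)) * sl i) mod M)"

end

theory Submission
  imports Defs
begin

text \<open>Every reconstructed share at level l is congruent to y_l modulo the participant's
  modulus: the public value w_i^(l) undoes the masking by h_l, and the last block holds residues of
  y_m directly. Since the moduli increase, any t_l of them multiply to at least m_1 ... m_(t_l),
  which exceeds y_l; so the Chinese remainder theorem recovers y_l exactly, and y_l mod m_0 = s.\<close>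

lemma Nsum_Suc: "Nsum nb (Suc l) = Nsum nb l + nb (Suc l)"
  by (simp add: Nsum_def)

lemma Nsum_mono: "l \<le> l' \<Longrightarrow> Nsum nb l \<le> Nsum nb l'"
  by (induction l' rule: dec_induct) (auto simp: Nsum_Suc)

lemma atLeastAtMost_Nsum_eq_UN_block: "{1..Nsum nb l} = (\<Union>w\<in>{1..l}. block nb w)"
proof (induction l)
  case 0
  then show ?case by (simp add: Nsum_def)
next
  case (Suc l)
  have "{1..Nsum nb (Suc l)} = {1..Nsum nb l} \<union> block nb (Suc l)"
    by (auto simp: block_def Nsum_Suc)
  also have "\<dots> = (\<Union>w\<in>{1..Suc l}. block nb w)"
    using Suc.IH by (auto simp: atLeastAtMostSuc_conv)
  finally show ?case .
qed

lemma mono_on_atMost_if_less_Suc: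
  fixes f :: "nat \<Rightarrow> 'a::order"
  assumes "\<forall>i<n. f i < f (Suc i)"
  shows "mono_on {..n} f"
proof (rule mono_onI)
  fix a b assume "a \<in> {..n}" "b \<in> {..n}" "a \<le> b"
  moreover have "f (min i n) \<le> f (min (Suc i) n)" for i
    using assms by (cases "i < n") (auto simp: min_def less_imp_le)
  ultimately show "f a \<le> f b"
    using lift_Suc_mono_le[of "\<lambda>i. f (min i n)" a b] by simp
qed

lemma prod_atLeastAtMost_le_prod_subset:
  fixes f :: "nat \<Rightarrow> 'a::linordered_idom"
  assumes mono: "mono_on {1..n} f" and ge1: "\<forall>i\<in>{1..n}. 1 \<le> f i"
  shows "S \<subseteq> {1..n} \<Longrightarrow> t \<le> card S \<Longrightarrow> (\<Prod>i=1..t. f i) \<le> (\<Prod>i\<in>S. f i)"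
proof (induction t arbitrary: S)
  case 0
  then show ?case using ge1 by (auto intro: prod_ge_1)
next
  case (Suc t)
  have fin: "finite S" using Suc.prems(1) finite_subset by blast
  then have "S \<noteq> {}" using Suc.prems(2) by auto
  define a where "a = Max S"
  have aS: "a \<in> S" using \<open>S \<noteq> {}\<close> fin by (simp add: a_def)
  have "S \<subseteq> {1..a}" using Suc.prems(1) fin by (auto simp: a_def)
  then have "Suc t \<le> a" using card_mono[of "{1..a}" S] Suc.prems(2) by simp
  moreover have "a \<le> n" using aS Suc.prems(1) by auto
  ultimately have fa: "f (Suc t) \<le> f a"
    using mono by (auto intro: mono_onD)
  have IH: "(\<Prod>i=1..t. f i) \<le> (\<Prod>i\<in>S - {a}. f i)"
    using Suc.prems aS fin by (intro Suc.IH) auto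
  have "(\<Prod>i=1..Suc t. f i) = (\<Prod>i=1..t. f i) * f (Suc t)"
    by (simp add: prod.cl_ivl_Suc)
  also have "\<dots> \<le> (\<Prod>i\<in>S - {a}. f i) * f a"
    using IH fa ge1 Suc.prems(1) \<open>Suc t \<le> a\<close> \<open>a \<le> n\<close>
    by (intro mult_mono) (auto intro!: prod_nonneg intro: order.trans[OF zero_le_one])
  also have "\<dots> = (\<Prod>i\<in>S. f i)"
    using fin aS by (simp add: prod.remove mult.commute)
  finally show ?case .
qed

lemma recon_Y_sum_cong:
  fixes mm :: "nat \<Rightarrow> nat" and lam sl :: "nat \<Rightarrow> int" and y :: int
  assumes "finite S" and "\<forall>i\<in>S. 0 < mm i" and "j \<in> S"
    and lam: "\<forall>i\<in>S. [lam i * ((\<Prod>k\<in>S. int (mm k)) div int (mm i)) = 1] (mod int (mm i))"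
    and sl: "\<forall>i\<in>S. [sl i = y] (mod int (mm i))"
  shows "[(\<Sum>i\<in>S. lam i * ((\<Prod>k\<in>S. int (mm k)) div int (mm i)) * sl i) = y] (mod int (mm j))"
proof -
  let ?M = "\<Prod>k\<in>S. int (mm k)"
  have other: "[(\<Sum>i\<in>S - {j}. lam i * (?M div int (mm i)) * sl i) = 0] (mod int (mm j))"
    unfolding cong_0_iff
  proof (rule dvd_sum)
    fix i assume i: "i \<in> S - {j}"
    then have "?M div int (mm i) = (\<Prod>k\<in>S - {i}. int (mm k))"
      using assms(1,2) prod_diff1[of S "\<lambda>k. int (mm k)" i] by auto
    moreover have "int (mm j) dvd (\<Prod>k\<in>S - {i}. int (mm k))"
      using i assms(1,3) by (intro dvd_prodI) auto
    ultimately show "int (mm j) dvd lam i * (?M div int (mm i)) * sl i" by simp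
  qed
  have own: "[lam j * (?M div int (mm j)) * sl j = 1 * y] (mod int (mm j))"
    using lam sl assms(3) by (intro cong_mult) auto
  have "(\<Sum>i\<in>S. lam i * (?M div int (mm i)) * sl i)
      = lam j * (?M div int (mm j)) * sl j + (\<Sum>i\<in>S - {j}. lam i * (?M div int (mm i)) * sl i)"
    using assms(1,3) by (simp add: sum.remove)
  with cong_add[OF own other] show ?thesis by simp
qed

lemma recon_Y_eq:
  fixes mm :: "nat \<Rightarrow> nat" and lam sl :: "nat \<Rightarrow> int" and y :: int
  assumes "finite S" and "\<forall>i\<in>S. 0 < mm i"
    and "\<forall>i\<in>S. \<forall>j\<in>S. i \<noteq> j \<longrightarrow> coprime (mm i) (mm j)"
    and "\<forall>i\<in>S. [lam i * ((\<Prod>k\<in>S. int (mm k)) div int (mm i)) = 1] (mod int (mm i))"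
    and "\<forall>i\<in>S. [sl i = y] (mod int (mm i))"
    and "0 \<le> y" and "y < (\<Prod>k\<in>S. int (mm k))"
  shows "recon_Y mm S lam sl = y"
proof -
  let ?M = "\<Prod>k\<in>S. int (mm k)"
  let ?X = "\<Sum>i\<in>S. lam i * (?M div int (mm i)) * sl i"
  have "[?X = y] (mod ?M)"
    using recon_Y_sum_cong[OF assms(1,2) _ assms(4,5)] assms(3)
    by (intro cong_cong_prod_coprime) auto
  then have "?X mod ?M = y"
    using assms(6,7) by (simp add: cong_def)
  then show ?thesis by (simp add: recon_Y_def)
qed

lemma recon_share_cong:
  fixes y sh :: "nat \<Rightarrow> int"
  assumes "n = Nsum nb m" and "l \<in> {1..m}" and i: "i \<in> {1..Nsum nb l}"
    and sh: "\<forall>i\<in>{1..n}. sh i = (if i \<le> Nsum nb (m - 1) then c i else y m mod int (mm i))"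
    and w: "\<forall>i\<in>{1..Nsum nb (m - 1)}. \<forall>l1\<in>{1..m}. i \<in> block nb l1 \<longrightarrow>
              (\<forall>j\<in>{l1..m}. w i j = (y j - h j (sh i) j) mod int (mm i))"
  shows "[recon_share m nb h sh w l i = y l] (mod int (mm i))"
proof (cases "l \<le> m - 1 \<or> i \<le> Nsum nb (m - 1)")
  case True
  then have i': "i \<in> {1..Nsum nb (m - 1)}"
    using i Nsum_mono[of l "m - 1" nb] by auto
  have "i \<in> (\<Union>w\<in>{1..l}. block nb w)"
    using i by (simp only: atLeastAtMost_Nsum_eq_UN_block)
  then obtain l1 where "l1 \<in> {1..l}" "i \<in> block nb l1"
    by blast
  then have "w i l = (y l - h l (sh i) l) mod int (mm i)"
    using w i' assms(2) by (metis atLeastAtMost_iff order_trans)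
  then show ?thesis
    using True by (simp add: recon_share_def cong_def mod_add_right_eq)
next
  case False
  then have "l = m"
    using assms(2) by auto
  then have "i \<in> {1..n}"
    using assms(1) i by simp
  then show ?thesis
    using False sh \<open>l = m\<close> by (simp add: recon_share_def cong_def)
qed

text \<open>The hypotheses on k and \<theta>, on the ranges of h and c, and the injectivity of h concern
  secrecy, not correctness, and are unused.\<close>

theorem mainTheorem1:
  fixes n m :: nat and nb t mm :: "nat \<Rightarrow> nat" and k \<theta> :: real
    and h :: "nat \<Rightarrow> int \<Rightarrow> nat \<Rightarrow> int"
    and s :: int and c alpha sh :: "nat \<Rightarrow> int" and w :: "nat \<Rightarrow> nat \<Rightarrow> int"
    and A :: "nat set" and l :: nat and lam :: "nat \<Rightarrow> int"
  assumes "n > 0" and "m > 0"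
    and "\<forall>j\<in>{1..m}. nb j \<ge> 1"
    and "n = Nsum nb m"
    and "1 \<le> t 1"
    and "\<forall>j\<in>{1..<m}. t j < t (j + 1)"
    and "\<forall>j\<in>{1..m}. t j \<le> Nsum nb j"
    and "prime (mm 0)"
    and "\<forall>i j. i < j \<and> j \<le> n \<longrightarrow> coprime (mm i) (mm j)"
    and "\<forall>i<n. mm i < mm (Suc i)"
    and "k \<ge> 1" and "0 < \<theta>" and "\<theta> < 1"
    and "\<forall>i\<in>{1..n}. k * real (mm 0) < real (mm i) \<and>
                     real (mm i) < k * real (mm 0) + real (mm 0) powr \<theta>"
    and "inj_on h {1..m}"
    and "\<forall>i\<in>{1..n}. \<forall>j\<in>{1..m}. \<forall>x. 0 \<le> x \<and> x < int (mm i) \<longrightarrow>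
                     0 \<le> h j x j \<and> h j x j < int (mm i)"
    and "0 \<le> s" and "s < int (mm 0)"
    and "\<forall>i\<in>{1..Nsum nb (m - 1)}. 0 \<le> c i \<and> c i < int (mm i)"
    and "\<forall>j\<in>{1..m}. 0 \<le> yval s alpha (mm 0) j \<and>
                     yval s alpha (mm 0) j < (\<Prod>i=1..t j. int (mm i))"
    and "\<forall>i\<in>{1..n}. sh i = (if i \<le> Nsum nb (m - 1) then c i
                              else yval s alpha (mm 0) m mod int (mm i))"
    and "\<forall>i\<in>{1..Nsum nb (m - 1)}. \<forall>l1\<in>{1..m}. i \<in> block nb l1 \<longrightarrow>
           (\<forall>j\<in>{l1..m}. w i j = (yval s alpha (mm 0) j - h j (sh i) j) mod int (mm i))"
    and "A \<in> access_structure n m nb t"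
    and "l \<in> {1..m}"
    and "card (A \<inter> {1..Nsum nb l}) \<ge> t l"
    and "\<forall>i\<in>A \<inter> {1..Nsum nb l}.
           [lam i * ((\<Prod>j\<in>A \<inter> {1..Nsum nb l}. int (mm j)) div int (mm i)) = 1] (mod int (mm i))"
  shows "recon_Y mm (A \<inter> {1..Nsum nb l}) lam (recon_share m nb h sh w l) = yval s alpha (mm 0) l
       \<and> recon_Y mm (A \<inter> {1..Nsum nb l}) lam (recon_share m nb h sh w l) mod int (mm 0) = s"
proof -
  define S where "S = A \<inter> {1..Nsum nb l}"
  let ?y = "yval s alpha (mm 0) l"
  have "S \<subseteq> {1..n}"
    using assms(4,24) Nsum_mono[of l m nb] by (auto simp: S_def)
  then have "finite S"
    by (rule finite_subset) simp
  have mono: "mono_on {..n} mm"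
    using assms(10) by (rule mono_on_atMost_if_less_Suc)
  have pos: "\<forall>i\<le>n. 0 < mm i"
    using mono_onD[OF mono, of 0] prime_gt_0_nat[OF assms(8)] by fastforce
  have y_bounds: "0 \<le> ?y" "?y < (\<Prod>i=1..t l. int (mm i))"
    using assms(20,24) by blast+
  have "(\<Prod>i=1..t l. int (mm i)) \<le> (\<Prod>i\<in>S. int (mm i))"
    using \<open>S \<subseteq> {1..n}\<close> assms(25) pos mono_onD[OF mono]
    by (intro prod_atLeastAtMost_le_prod_subset[where n = n])
      (auto simp: S_def intro!: mono_onI)
  with y_bounds have "?y < (\<Prod>i\<in>S. int (mm i))"
    by linarith
  moreover have "\<forall>i\<in>S. [recon_share m nb h sh w l i = ?y] (mod int (mm i))"
    using assms(4,21,22,24)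
    by (intro ballI recon_share_cong[where y = "yval s alpha (mm 0)"]) (auto simp: S_def)
  moreover have "\<forall>i\<in>S. \<forall>j\<in>S. i \<noteq> j \<longrightarrow> coprime (mm i) (mm j)"
    using \<open>S \<subseteq> {1..n}\<close> assms(9) by (metis atLeastAtMost_iff coprime_commute nat_neq_iff subsetD)
  ultimately have "recon_Y mm S lam (recon_share m nb h sh w l) = ?y"
    using \<open>finite S\<close> \<open>S \<subseteq> {1..n}\<close> pos assms(26) y_bounds(1)
    by (intro recon_Y_eq) (auto simp: S_def)
  moreover have "?y mod int (mm 0) = s"
    using assms(17,18) by (simp add: yval_def)
  ultimately show ?thesis
    by (simp add: S_def)
qed

end
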